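(* Let $(p,q,k)$ and $(p',q',k')$ be two distinct integer triples satisfying $(k+\tfrac12)^2<p^2+q^2$ and $(k'+\tfrac12)^2<p'^2+q'^2$, and suppose $\alpha(p,q,k)=\alpha(p',q',k')$. Then $pq'-qp'=0$, i.e. $(p,q)$ and $(p',q')$ are collinear.
   Context: For integers $p,q,k$ with $(k+\tfrac12)^2<p^2+q^2$, put $\lambda=\sqrt{p^2+q^2-(k+\tfrac12)^2}>0$ and let $\alpha(p,q,k)\in\mathbb R/2\pi\mathbb Z$ be the unique angle with $e^{i\alpha(p,q,k)}(p+qi)=k+\tfrac12+\lambda i$ (it exists since both sides have the same modulus). *)

theory Defs
  imports "HOL-Analysis.Analysis"
begin

definition admissible :: "int \<Rightarrow> int \<Rightarrow> int \<Rightarrow> bool" where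
  "admissible p q k \<longleftrightarrow> (real_of_int k + 1/2)^2 < real_of_int (p^2 + q^2)"

definition lam :: "int \<Rightarrow> int \<Rightarrow> int \<Rightarrow> real" where
  "lam p q k = sqrt (real_of_int (p^2 + q^2) - (real_of_int k + 1/2)^2)"

text \<open>The angle alpha(p,q,k) in R/2piZ, represented by its canonical representative
  in (-pi, pi]: the argument of the unit complex number e^(i alpha) determined by
  e^(i alpha) (p + q i) = k + 1/2 + lambda i.\<close>
definition alpha :: "int \<Rightarrow> int \<Rightarrow> int \<Rightarrow> real" where
  "alpha p q k = Arg (Complex (real_of_int k + 1/2) (lam p q k) / Complex (real_of_int p) (real_of_int q))"

end

theory Submission
  imports Defs "HOL-Computational_Algebra.Nth_Powers"
begin

text \<open>Equal angles mean \<open>(k + 1/2 + \<lambda> i)(p' + q' i) = (k' + 1/2 + \<lambda>' i)(p + q i)\<close>.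
  Eliminating \<open>\<lambda>'\<close> between the real and imaginary parts leaves \<open>2\<lambda> D = M\<close> with
  \<open>D = p q' - q p'\<close> and an integer \<open>M\<close>; squaring gives \<open>m D\<^sup>2 = M\<^sup>2\<close> with
  \<open>m = (2\<lambda>)\<^sup>2 = 4(p\<^sup>2 + q\<^sup>2) - (2k + 1)\<^sup>2\<close>. As \<open>m \<equiv> 3 (mod 4)\<close>, \<open>m\<close> is not a square,
  so \<open>D = 0\<close>.\<close>

lemma square_mod_4_neq_3: "(y::int)^2 mod 4 \<noteq> 3"
proof (cases "even y")
  case True
  then obtain t where "y = 2 * t" by blast
  then show ?thesis by (simp add: power2_eq_square)
next
  case False
  then obtain t where "y = 2 * t + 1" using oddE by blast
  then have "y^2 = 4 * (t * t + t) + 1" by (simp add: power2_eq_square algebra_simps)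
  then show ?thesis by presburger
qed

lemma not_is_square_if_mod_4_eq_3:
  fixes m :: int
  assumes "m mod 4 = 3"
  shows "\<not> is_square m"
  using assms square_mod_4_neq_3 by (auto elim: is_nth_powerE)

lemma eq_0_if_mult_square_eq_square:
  fixes m D M :: int
  assumes "m mod 4 = 3" and "m * D^2 = M^2"
  shows "D = 0"
proof (rule ccontr)
  assume "D \<noteq> 0"
  then have "is_square (m * D^2) \<longleftrightarrow> is_square m"
    by (intro is_nth_power_mult_cancel_right) auto
  with assms show False
    using not_is_square_if_mod_4_eq_3 by (metis is_nth_power_nth_power)
qed

lemma four_sum_squares_minus_odd_square_mod_4:
  "(4 * (p^2 + q^2) - (2 * k + 1)^2) mod 4 = (3::int)"
proof -
  have "4 * (p^2 + q^2) - (2 * k + 1)^2 = 3 + 4 * (p^2 + q^2 - k * k - k - 1)"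
    by (simp add: power2_eq_square algebra_simps)
  then show ?thesis
    by (simp only: mod_mult_self2) simp
qed

lemma cross_mult_eq_if_Arg_divide_eq:
  fixes w z w' z' :: complex
  assumes "norm w = norm z" "norm w' = norm z'" "z \<noteq> 0" "z' \<noteq> 0"
    and "Arg (w / z) = Arg (w' / z')"
  shows "w * z' = w' * z"
proof -
  have "norm (w / z) = 1" "norm (w' / z') = 1"
    using assms(1-4) by (simp_all add: norm_divide)
  then have "w / z = w' / z'"
    using Arg_eq[of "w / z"] Arg_eq[of "w' / z'"] assms(5) by (metis norm_zero zero_neq_one)
  then show ?thesis
    using assms(3,4) by (simp add: field_simps)
qed

lemma det_eq_if_Complex_mult_eq:
  assumes "Complex a b * Complex x' y' = Complex a' b' * Complex x y"
  shows "b * (x * y' - y * x') = x * (a * x' - a' * x) + y * (a * y' - a' * y)"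
proof -
  have re: "a * x' - a' * x = b * y' - b' * y"
    using arg_cong[OF assms, of Re] by simp
  have im: "a * y' - a' * y = b' * x - b * x'"
    using arg_cong[OF assms, of Im] by simp
  show ?thesis
    unfolding re im by (simp add: algebra_simps)
qed

lemma lam_squared:
  assumes "admissible p q k"
  shows "(lam p q k)^2 = of_int (p^2 + q^2) - (of_int k + 1/2)^2"
  using assms unfolding admissible_def lam_def by simp

lemma four_lam_squared:
  assumes "admissible p q k"
  shows "(2 * lam p q k)^2 = of_int (4 * (p^2 + q^2) - (2 * k + 1)^2)"
  using lam_squared[OF assms] by (simp add: power2_eq_square algebra_simps)

lemma norm_Complex_lam:
  assumes "admissible p q k"
  shows "norm (Complex (of_int k + 1/2) (lam p q k)) = norm (Complex (of_int p) (of_int q))"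
  using lam_squared[OF assms] unfolding cmod_def by simp

lemma Complex_neq_0_if_admissible:
  assumes "admissible p q k"
  shows "Complex (of_int p) (of_int q) \<noteq> 0"
  using assms unfolding admissible_def by (auto simp: complex_eq_iff)

theorem lemma2:
  fixes p q k p' q' k' :: int
  assumes "(p, q, k) \<noteq> (p', q', k')"
    and "admissible p q k" and "admissible p' q' k'"
    and "alpha p q k = alpha p' q' k'"
  shows "p * q' - q * p' = 0"
proof -
  define b where "b = lam p q k"
  define D where "D = p * q' - q * p'"
  define M where "M = p * ((2*k+1) * p' - (2*k'+1) * p) + q * ((2*k+1) * q' - (2*k'+1) * q)"
  define m where "m = 4 * (p^2 + q^2) - (2 * k + 1)^2"
  have cross: "Complex (of_int k + 1/2) b * Complex (of_int p') (of_int q')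
      = Complex (of_int k' + 1/2) (lam p' q' k') * Complex (of_int p) (of_int q)"
    using assms(2-4) unfolding alpha_def b_def
    by (intro cross_mult_eq_if_Arg_divide_eq norm_Complex_lam Complex_neq_0_if_admissible)
  have det: "2 * b * of_int D = of_int M"
    using det_eq_if_Complex_mult_eq[OF cross] unfolding D_def M_def by (simp add: algebra_simps)
  have "of_int (m * D^2) = (2 * b)^2 * (of_int D)^2"
    using four_lam_squared[OF assms(2)] unfolding b_def m_def by simp
  also have "\<dots> = (2 * b * of_int D)^2"
    by (simp only: power_mult_distrib)
  also have "\<dots> = of_int (M^2)"
    by (simp only: det of_int_power)
  finally have "m * D^2 = M^2"
    by (simp only: of_int_eq_iff)
  then show ?thesis
    using eq_0_if_mult_square_eq_square four_sum_squares_minus_odd_square_mod_4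
    unfolding D_def m_def by blast
qed

end
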